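(* The set of Lebesgue integrable functions on $[0,1]$ which are not equivalent (i.e. not equal almost everywhere) to a Riemann integrable function on any nondegenerate subinterval of $[0,1]$ is spaceable in $L^1([0,1])$.
   Context: A subset $S$ of a topological vector space $X$ is spaceable if $S\cup\{0\}$ contains a closed infinite-dimensional vector subspace of $X$. *)

theory Defs
  imports "HOL-Analysis.Analysis"
begin

(* Riemann integrability of f on [a,b]: Riemann sums over tagged divisions of
   mesh controlled by a constant gauge converge to some value I. *)
definition riemann_integrable_on :: "(real \<Rightarrow> real) \<Rightarrow> real \<Rightarrow> real \<Rightarrow> bool" where
  "riemann_integrable_on f a b \<longleftrightarrow>
     (\<exists>I. \<forall>e>0. \<exists>\<delta>>0. \<forall>D. D tagged_division_of {a..b} \<and> (\<lambda>x. ball x \<delta>) fine D \<longrightarrow>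
        \<bar>(\<Sum>(x,K)\<in>D. Henstock_Kurzweil_Integration.content K * f x) - I\<bar> < e)"

definition ae_eq_on :: "real set \<Rightarrow> (real \<Rightarrow> real) \<Rightarrow> (real \<Rightarrow> real) \<Rightarrow> bool" where
  "ae_eq_on A f g \<longleftrightarrow> (AE x in lborel. x \<in> A \<longrightarrow> f x = g x)"

(* representatives of elements of L^1([0,1]) *)
definition L1_01 :: "(real \<Rightarrow> real) set" where
  "L1_01 = {f. set_integrable lborel {0..1} f}"

definition L1_dist :: "(real \<Rightarrow> real) \<Rightarrow> (real \<Rightarrow> real) \<Rightarrow> real" where
  "L1_dist f g = (LINT x:{0..1}|lborel. \<bar>f x - g x\<bar>)"

(* A set V of representatives that is saturated under a.e.-equality on [0,1]
   corresponds exactly to a subset of L^1([0,1]).  V is a closed infinite-dimensional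
   vector subspace of L^1([0,1]). *)
definition closed_inf_dim_subspace_L1 :: "(real \<Rightarrow> real) set \<Rightarrow> bool" where
  "closed_inf_dim_subspace_L1 V \<longleftrightarrow>
     V \<subseteq> L1_01 \<and>
     (\<forall>f\<in>V. \<forall>g\<in>L1_01. ae_eq_on {0..1} f g \<longrightarrow> g \<in> V) \<and>
     (\<lambda>x. 0) \<in> V \<and>
     (\<forall>f\<in>V. \<forall>g\<in>V. (\<lambda>x. f x + g x) \<in> V) \<and>
     (\<forall>c::real. \<forall>f\<in>V. (\<lambda>x. c * f x) \<in> V) \<and>
     (\<forall>F g. (\<forall>n. F n \<in> V) \<and> g \<in> L1_01 \<and> (\<lambda>n. L1_dist (F n) g) \<longlonglongrightarrow> 0 \<longrightarrow> g \<in> V) \<and>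
     (\<exists>E::nat \<Rightarrow> real \<Rightarrow> real. (\<forall>i. E i \<in> V) \<and>
        (\<forall>n c. ae_eq_on {0..1} (\<lambda>x. \<Sum>i<n. c i * E i x) (\<lambda>x. 0) \<longrightarrow> (\<forall>i<n. c i = 0)))"

(* S \<subseteq> L^1([0,1]) (given by a.e.-invariant representatives) is spaceable:
   S \<union> {0} contains a closed infinite-dimensional subspace. *)
definition spaceable_L1 :: "(real \<Rightarrow> real) set \<Rightarrow> bool" where
  "spaceable_L1 S \<longleftrightarrow>
     (\<exists>V. closed_inf_dim_subspace_L1 V \<and>
          (\<forall>f\<in>V. \<not> ae_eq_on {0..1} f (\<lambda>x. 0) \<longrightarrow> f \<in> S))"

definition nowhere_Riemann_L1 :: "(real \<Rightarrow> real) set" where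
  "nowhere_Riemann_L1 = {f \<in> L1_01. \<forall>a b. 0 \<le> a \<and> a < b \<and> b \<le> 1 \<longrightarrow>
      \<not> (\<exists>g. riemann_integrable_on g a b \<and> ae_eq_on {a..b} f g)}"

end

theory Submission
  imports Defs
begin

text \<open>Let \<open>S\<^sub>n = {x. frac (2\<^sup>n x) < 3\<^sup>-\<^sup>n}\<close> and let the layer \<open>T\<^sub>n\<close> be \<open>S\<^sub>n\<close> minus all
  \<open>S\<^sub>m\<close> with \<open>m > n\<close>. The layers are disjoint, \<open>T\<^sub>n \<inter> [0,1]\<close> has measure at most \<open>2 \<cdot> 3\<^sup>-\<^sup>n\<close>,
  but \<open>T\<^sub>n\<close> fills a fixed fraction of every dyadic interval of length at least \<open>2\<^sup>-\<^sup>n\<close>.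
  Hence \<open>E = \<Sum>\<^sub>n 2\<^sup>n 1\<^sub>T\<^sub>n\<close> is integrable on \<open>[0,1]\<close>, while on every interval and along every
  infinite set of indices \<open>n\<close> it takes the value \<open>2\<^sup>n\<close> on sets of positive measure.
  Splitting the indices into infinitely many infinite classes gives disjoint blocks \<open>A\<^sub>k\<close>;
  the functions that equal \<open>c\<^sub>k E\<close> on each \<open>A\<^sub>k\<close> and vanish off the layers form a closed
  infinite-dimensional subspace of \<open>L\<^sup>1[0,1]\<close>. A nonzero member has some \<open>c\<^sub>k \<noteq> 0\<close>, so it is
  essentially unbounded on every subinterval, whereas a Riemann integrable function is
  essentially bounded.\<close>

lemma set_integral_cong_AE_real:
  fixes f g :: "'a \<Rightarrow> real"
  assumes "set_integrable M S f" "set_integrable M S g" "AE x\<in>S in M. f x = g x"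
  shows "(LINT x:S|M. f x) = (LINT x:S|M. g x)"
  using assms unfolding set_integrable_def set_lebesgue_integral_def
  by (intro integral_cong_AE) (auto simp: indicator_def)

definition ae_multiple_on :: "'a measure \<Rightarrow> 'a set \<Rightarrow> ('a \<Rightarrow> real) \<Rightarrow> ('a \<Rightarrow> real) \<Rightarrow> bool" where
  "ae_multiple_on M S h f \<longleftrightarrow> (\<exists>c. AE x\<in>S in M. f x = c * h x)"

lemma ae_multiple_on_zero: "ae_multiple_on M S h (\<lambda>x. 0)"
  unfolding ae_multiple_on_def by (intro exI[of _ 0]) simp

lemma ae_multiple_on_add:
  assumes "ae_multiple_on M S h f" "ae_multiple_on M S h g"
  shows "ae_multiple_on M S h (\<lambda>x. f x + g x)"
proof -
  obtain a b where "AE x\<in>S in M. f x = a * h x" "AE x\<in>S in M. g x = b * h x"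
    using assms unfolding ae_multiple_on_def by blast
  then have "AE x\<in>S in M. f x + g x = (a + b) * h x"
    by eventually_elim (simp add: distrib_right)
  then show ?thesis
    unfolding ae_multiple_on_def by blast
qed

lemma ae_multiple_on_cmult:
  assumes "ae_multiple_on M S h f"
  shows "ae_multiple_on M S h (\<lambda>x. a * f x)"
proof -
  obtain b where "AE x\<in>S in M. f x = b * h x"
    using assms unfolding ae_multiple_on_def by blast
  then have "AE x\<in>S in M. a * f x = (a * b) * h x"
    by eventually_elim simp
  then show ?thesis
    unfolding ae_multiple_on_def by blast
qed

lemma ae_multiple_on_AE_cong:
  assumes "ae_multiple_on M S h f" "AE x\<in>S in M. f x = g x"
  shows "ae_multiple_on M S h g"
proof -
  obtain b where "AE x\<in>S in M. f x = b * h x"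
    using assms(1) unfolding ae_multiple_on_def by blast
  with assms(2) have "AE x\<in>S in M. g x = b * h x"
    by eventually_elim simp
  then show ?thesis
    unfolding ae_multiple_on_def by blast
qed

lemma abs_diff_ratio_mult_set_integral_le:
  fixes g h :: "'a \<Rightarrow> real"
  assumes h: "set_integrable M S h" "\<And>x. 0 \<le> h x" and g: "set_integrable M S g"
  defines "c \<equiv> (LINT x:S|M. g x) / (LINT x:S|M. h x)"
  shows "\<bar>a - c\<bar> * (LINT x:S|M. h x) \<le> (LINT x:S|M. \<bar>a * h x - g x\<bar>)"
proof (cases "(LINT x:S|M. h x) = 0")
  case True
  then show ?thesis
    by (simp add: set_lebesgue_integral_def)
next
  case False
  have int_h: "set_integrable M S (\<lambda>x. a * h x)"
    using h(1) by simp
  have "(a - c) * (LINT x:S|M. h x) = (LINT x:S|M. a * h x - g x)"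
    using False g int_h by (simp add: c_def algebra_simps)
  moreover have "0 \<le> (LINT x:S|M. h x)"
    using h(2) by (simp add: set_lebesgue_integral_def)
  ultimately have "\<bar>a - c\<bar> * (LINT x:S|M. h x) = \<bar>LINT x:S|M. a * h x - g x\<bar>"
    by (metis abs_mult abs_of_nonneg)
  also have "\<dots> \<le> (LINT x:S|M. \<bar>a * h x - g x\<bar>)"
    using set_integral_norm_bound[OF set_integral_diff(1)[OF int_h g]] by simp
  finally show ?thesis .
qed

text \<open>The comparison multiple \<open>c h\<close> does not depend on \<open>f\<close>; this is what lets the estimate
  pass to \<open>L\<^sup>1\<close>-limits below.\<close>

lemma set_integral_dist_ratio_multiple_le:
  fixes f g h :: "'a \<Rightarrow> real"
  assumes h: "set_integrable M S h" "\<And>x. 0 \<le> h x"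
    and f: "set_integrable M S f" and g: "set_integrable M S g"
    and f_multiple: "AE x\<in>S in M. f x = a * h x"
  defines "c \<equiv> (LINT x:S|M. g x) / (LINT x:S|M. h x)"
  shows "(LINT x:S|M. \<bar>g x - c * h x\<bar>) \<le> 2 * (LINT x:S|M. \<bar>f x - g x\<bar>)"
proof -
  define d where "d = (LINT x:S|M. \<bar>f x - g x\<bar>)"
  have int_h: "set_integrable M S (\<lambda>x. b * h x)" for b
    using h(1) by simp
  have int_ah: "set_integrable M S (\<lambda>x. \<bar>a * h x - g x\<bar>)"
    using int_h g by (intro set_integrable_abs set_integral_diff)
  have dist_a: "(LINT x:S|M. \<bar>a * h x - g x\<bar>) = d"
    unfolding d_def using f_multiple int_ah f g
    by (intro set_integral_cong_AE_real) (auto intro: set_integrable_abs)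
  have "(LINT x:S|M. \<bar>g x - c * h x\<bar>) \<le> (LINT x:S|M. \<bar>a * h x - g x\<bar> + \<bar>a - c\<bar> * h x)"
  proof (rule set_integral_mono)
    show "set_integrable M S (\<lambda>x. \<bar>g x - c * h x\<bar>)"
      using g int_h by (intro set_integrable_abs set_integral_diff)
    show "set_integrable M S (\<lambda>x. \<bar>a * h x - g x\<bar> + \<bar>a - c\<bar> * h x)"
      using int_ah int_h by (intro set_integral_add)
    show "\<bar>g x - c * h x\<bar> \<le> \<bar>a * h x - g x\<bar> + \<bar>a - c\<bar> * h x" for x
    proof -
      have "\<bar>(a - c) * h x\<bar> = \<bar>a - c\<bar> * h x"
        using h(2)[of x] by (simp add: abs_mult)
      then show ?thesis
        using abs_triangle_ineq[of "g x - a * h x" "(a - c) * h x"]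
        by (simp add: algebra_simps abs_minus_commute)
    qed
  qed
  also have "\<dots> = d + \<bar>a - c\<bar> * (LINT x:S|M. h x)"
    using int_ah int_h dist_a by simp
  also have "\<dots> \<le> 2 * d"
    using abs_diff_ratio_mult_set_integral_le[OF h g, of a] dist_a by (simp add: c_def)
  finally show ?thesis
    unfolding d_def .
qed

lemma ae_multiple_limit:
  fixes h g :: "'a \<Rightarrow> real" and F :: "nat \<Rightarrow> 'a \<Rightarrow> real"
  assumes h: "set_integrable M S h" "\<And>x. 0 \<le> h x"
    and F: "\<And>n. set_integrable M S (F n)" and g: "set_integrable M S g"
    and F_multiple: "\<And>n. ae_multiple_on M S h (F n)"
    and lim: "(\<lambda>n. LINT x:S|M. \<bar>F n x - g x\<bar>) \<longlonglongrightarrow> 0"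
  shows "ae_multiple_on M S h g"
proof -
  define c where "c = (LINT x:S|M. g x) / (LINT x:S|M. h x)"
  define Q where "Q = (LINT x:S|M. \<bar>g x - c * h x\<bar>)"
  have "Q \<le> 2 * (LINT x:S|M. \<bar>F n x - g x\<bar>)" for n
  proof -
    obtain a where "AE x\<in>S in M. F n x = a * h x"
      using F_multiple unfolding ae_multiple_on_def by blast
    with h F g show ?thesis
      unfolding Q_def c_def by (rule set_integral_dist_ratio_multiple_le)
  qed
  then have "Q / 2 \<le> 0"
    by (intro LIMSEQ_le_const[OF lim]) (auto simp: mult.commute)
  moreover have "0 \<le> Q"
    by (simp add: Q_def set_lebesgue_integral_def)
  ultimately have "Q = 0"
    by linarith
  then have "(\<integral>x. indicator S x * \<bar>g x - c * h x\<bar> \<partial>M) = 0"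
    unfolding Q_def set_lebesgue_integral_def by simp
  moreover have "set_integrable M S (\<lambda>x. \<bar>g x - c * h x\<bar>)"
    using g h(1) by (intro set_integrable_abs set_integral_diff) simp_all
  ultimately have "AE x in M. indicator S x * \<bar>g x - c * h x\<bar> = 0"
    by (subst (asm) integral_nonneg_eq_0_iff_AE) (auto simp: set_integrable_def)
  then show ?thesis
    unfolding ae_multiple_on_def by (intro exI[of _ c]) (auto simp: indicator_def)
qed

lemma emeasure_lborel_eq_0_AE: "AE x in lborel. x \<notin> A \<Longrightarrow> emeasure lborel A = 0"
  using emeasure_eq_0_AE[of "\<lambda>x. x \<in> A" lborel] by simp

lemma tagged_division_of_retag:
  fixes D :: "real set set"
  assumes D: "D division_of {a..b}" and t: "\<And>K. K \<in> D \<Longrightarrow> t K \<in> K"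
  shows "(\<lambda>K. (t K, K)) ` D tagged_division_of {a..b}"
proof (rule tagged_division_ofI)
  show "finite ((\<lambda>K. (t K, K)) ` D)"
    using division_ofD(1)[OF D] by simp
  have "{K. \<exists>x. (x, K) \<in> (\<lambda>K. (t K, K)) ` D} = D"
    by auto
  then show "\<Union>{K. \<exists>x. (x, K) \<in> (\<lambda>K. (t K, K)) ` D} = {a..b}"
    using division_ofD(6)[OF D] by simp
  fix x K
  assume xK: "(x, K) \<in> (\<lambda>K. (t K, K)) ` D"
  then show "x \<in> K"
    using t by auto
  show "K \<subseteq> {a..b}" "\<exists>a b. K = cbox a b"
    using xK division_ofD(2,4)[OF D] by auto
  fix x' K'
  assume "(x', K') \<in> (\<lambda>K. (t K, K)) ` D" "(x, K) \<noteq> (x', K')"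
  with xK show "interior K \<inter> interior K' = {}"
    using division_ofD(5)[OF D] by auto
qed

text \<open>A \<open>\<delta>/2\<close>-fine division stays \<open>\<delta>\<close>-fine under every choice of tags.\<close>

lemma riemann_integrable_on_division_sums:
  assumes "riemann_integrable_on g a b"
  obtains D I where "D division_of {a..b}"
    "\<And>t. (\<And>K. K \<in> D \<Longrightarrow> t K \<in> K) \<Longrightarrow> \<bar>(\<Sum>K\<in>D. measure lborel K * g (t K)) - I\<bar> < 1"
proof -
  obtain I \<delta> where "\<delta> > 0" and I: "\<And>D. D tagged_division_of {a..b} \<Longrightarrow> (\<lambda>x. ball x \<delta>) fine D \<Longrightarrow>
      \<bar>(\<Sum>(x, K)\<in>D. measure lborel K * g x) - I\<bar> < 1"
    using assms unfolding riemann_integrable_on_def by (meson zero_less_one)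
  have "gauge (\<lambda>x. ball x (\<delta>/2))"
    using \<open>\<delta> > 0\<close> by (intro gauge_ball) simp
  then obtain D0 where D0: "D0 tagged_division_of {a..b}" "(\<lambda>x. ball x (\<delta>/2)) fine D0"
    using fine_division_exists_real by blast
  define D where "D = snd ` D0"
  have D: "D division_of {a..b}"
    unfolding D_def using D0(1) by (rule division_of_tagged_division)
  have "\<bar>(\<Sum>K\<in>D. measure lborel K * g (t K)) - I\<bar> < 1" if t: "\<And>K. K \<in> D \<Longrightarrow> t K \<in> K" for t
  proof -
    have "(\<lambda>x. ball x \<delta>) fine (\<lambda>K. (t K, K)) ` D"
    proof (rule fineI)
      fix x K
      assume "(x, K) \<in> (\<lambda>K. (t K, K)) ` D"
      then have K: "K \<in> D" and x: "x = t K"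
        by auto
      then obtain x0 where x0: "K \<subseteq> ball x0 (\<delta>/2)"
        using D0(2) unfolding D_def fine_def by fastforce
      then have "dist x0 x < \<delta>/2"
        using t[OF K] x by auto
      show "K \<subseteq> ball x \<delta>"
      proof
        fix z
        assume "z \<in> K"
        then have "dist x0 z < \<delta>/2"
          using x0 by auto
        with \<open>dist x0 x < \<delta>/2\<close> show "z \<in> ball x \<delta>"
          by (metis dist_commute dist_triangle_half_l mem_ball)
      qed
    qed
    moreover have "(\<Sum>(x, K)\<in>(\<lambda>K. (t K, K)) ` D. measure lborel K * g x) = (\<Sum>K\<in>D. measure lborel K * g (t K))"
      by (subst sum.reindex) (auto simp: inj_on_def)
    ultimately show ?thesis
      using I[OF tagged_division_of_retag[OF D t]] by simp
  qed
  with D show ?thesis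
    using that by blast
qed

lemma null_sets_Union_null_cells:
  assumes "D division_of S"
  shows "\<Union>{K\<in>D. measure lborel K = 0} \<in> null_sets lborel"
proof (rule null_sets.finite_Union)
  show "finite {K \<in> D. measure lborel K = 0}"
    using division_ofD(1)[OF assms] by simp
  show "{K \<in> D. measure lborel K = 0} \<subseteq> null_sets lborel"
  proof
    fix K
    assume K: "K \<in> {K \<in> D. measure lborel K = 0}"
    then obtain u v where "K = cbox u v"
      using division_ofD(4)[OF assms] by blast
    with K show "K \<in> null_sets lborel"
      by (simp add: null_sets_def emeasure_eq_measure2 del: box_real)
  qed
qed

text \<open>Moving the tag of the single cell \<open>K\<close> from \<open>z\<close> to \<open>y\<close> changes the Riemann sum
  by \<open>|K| (g y - g z)\<close>.\<close>

lemma division_sums_cell_oscillation: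
  fixes a b :: real
  assumes D: "D division_of {a..b}"
    and sums: "\<And>t. (\<And>K. K \<in> D \<Longrightarrow> t K \<in> K) \<Longrightarrow> \<bar>(\<Sum>K\<in>D. measure lborel K * g (t K)) - I\<bar> < 1"
    and K: "K \<in> D" "y \<in> K" "z \<in> K"
  shows "measure lborel K * \<bar>g y - g z\<bar> < 2"
proof -
  define t where "t L = (SOME x. x \<in> L)" for L :: "real set"
  have t: "t L \<in> L" if "L \<in> D" for L
    using division_ofD(3)[OF D that] unfolding t_def by (metis some_in_eq)
  define R where "R = (\<Sum>L\<in>D - {K}. measure lborel L * g (t L))"
  have "(\<Sum>L\<in>D. measure lborel L * g ((t(K := u)) L)) = measure lborel K * g u + R" for u
    using division_ofD(1)[OF D] K(1) by (simp add: sum.remove R_def)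
  moreover have "\<bar>(\<Sum>L\<in>D. measure lborel L * g ((t(K := u)) L)) - I\<bar> < 1" if "u \<in> K" for u
    using t that by (intro sums) auto
  ultimately have "\<bar>measure lborel K * g y + R - I\<bar> < 1" "\<bar>measure lborel K * g z + R - I\<bar> < 1"
    using K(2,3) by metis+
  then have "\<bar>measure lborel K * g y - measure lborel K * g z\<bar> < 2"
    by linarith
  then show ?thesis
    using measure_nonneg[of lborel K] by (metis abs_mult abs_of_nonneg right_diff_distrib)
qed

lemma riemann_integrable_on_AE_bounded:
  assumes "riemann_integrable_on g a b"
  obtains B where "AE x\<in>{a..b} in lborel. \<bar>g x\<bar> \<le> B"
proof -
  obtain D I where D: "D division_of {a..b}"
    and sums: "\<And>t. (\<And>K. K \<in> D \<Longrightarrow> t K \<in> K) \<Longrightarrow> \<bar>(\<Sum>K\<in>D. measure lborel K * g (t K)) - I\<bar> < 1"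
    using riemann_integrable_on_division_sums[OF assms] by blast
  define t where "t K = (SOME x. x \<in> K)" for K :: "real set"
  have t: "t K \<in> K" if "K \<in> D" for K
    using division_ofD(3)[OF D that] unfolding t_def by (metis some_in_eq)
  define N where "N = \<Union>{K\<in>D. measure lborel K = 0}"
  have bound: "\<bar>g y\<bar> \<le> (\<Sum>K\<in>D. \<bar>g (t K)\<bar> + 2 / measure lborel K)" if y: "y \<in> {a..b} - N" for y
  proof -
    obtain K where K: "K \<in> D" "y \<in> K"
      using division_ofD(6)[OF D] y by blast
    then have "measure lborel K > 0"
      using y unfolding N_def by (auto simp: less_le)
    moreover have "measure lborel K * \<bar>g y - g (t K)\<bar> < 2"
      using D sums K t[OF K(1)] by (rule division_sums_cell_oscillation)
    ultimately have "\<bar>g y - g (t K)\<bar> < 2 / measure lborel K"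
      by (simp add: field_simps)
    then have "\<bar>g y\<bar> \<le> \<bar>g (t K)\<bar> + 2 / measure lborel K"
      by linarith
    also have "\<dots> \<le> (\<Sum>K\<in>D. \<bar>g (t K)\<bar> + 2 / measure lborel K)"
      using division_ofD(1)[OF D] K(1) by (intro member_le_sum) auto
    finally show ?thesis .
  qed
  from AE_not_in[OF null_sets_Union_null_cells[OF D]]
  have "AE x\<in>{a..b} in lborel. \<bar>g x\<bar> \<le> (\<Sum>K\<in>D. \<bar>g (t K)\<bar> + 2 / measure lborel K)"
    by eventually_elim (use bound N_def in blast)
  then show ?thesis
    by (rule that)
qed

lemma sets_frac_less:
  fixes a b N s :: real
  shows "{x. a \<le> x \<and> x < b \<and> frac (N * x) < s} \<in> sets borel"
  unfolding frac_def by measurable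

lemma frac_less_one_period:
  fixes N s :: real and q :: int
  assumes N: "0 < N" and s: "0 \<le> s" "s \<le> 1"
  shows "{x. of_int q / N \<le> x \<and> x < of_int (q + 1) / N \<and> frac (N * x) < s}
           = {of_int q / N ..< (of_int q + s) / N}"
proof (intro set_eqI)
  fix x
  have "of_int q / N \<le> x \<and> x < of_int (q + 1) / N \<longleftrightarrow> of_int q \<le> N * x \<and> N * x < of_int q + 1"
    using N by (auto simp: field_simps)
  moreover have "frac (N * x) = N * x - of_int q" if "of_int q \<le> N * x" "N * x < of_int q + 1"
    using that by (simp add: frac_def floor_unique)
  ultimately show "x \<in> {x. of_int q / N \<le> x \<and> x < of_int (q + 1) / N \<and> frac (N * x) < s}
      \<longleftrightarrow> x \<in> {of_int q / N ..< (of_int q + s) / N}"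
    using N s by (auto simp: field_simps)
qed

lemma emeasure_frac_less:
  fixes N s :: real and p q :: int
  assumes N: "0 < N" and s: "0 \<le> s" "s \<le> 1" and pq: "p \<le> q"
  shows "emeasure lborel {x. of_int p / N \<le> x \<and> x < of_int q / N \<and> frac (N * x) < s}
           = ennreal (of_int (q - p) * s / N)"
  using pq
proof (induction q rule: int_ge_induct)
  case base
  have "{x. of_int p / N \<le> x \<and> x < of_int p / N \<and> frac (N * x) < s} = {}"
    by auto
  then show ?case
    by (subst \<open>_ = {}\<close>) simp
next
  case (step q)
  let ?R = "\<lambda>p q. {x. of_int p / N \<le> x \<and> x < of_int q / N \<and> frac (N * x) < s}"
  have "?R p (q + 1) = ?R p q \<union> ?R q (q + 1)"
    using step.hyps N by (auto simp: field_simps)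
  then have "emeasure lborel (?R p (q + 1)) = emeasure lborel (?R p q \<union> ?R q (q + 1))"
    by simp
  also have "\<dots> = emeasure lborel (?R p q) + emeasure lborel (?R q (q + 1))"
    by (rule plus_emeasure[symmetric]) (auto simp: sets_frac_less)
  also have "emeasure lborel (?R q (q + 1)) = ennreal (s / N)"
    unfolding frac_less_one_period[OF N s] using N s by (simp add: field_simps diff_divide_distrib)
  also have "emeasure lborel (?R p q) + ennreal (s / N) = ennreal (of_int (q - p) * s / N + s / N)"
    using step N s by simp
  also have "of_int (q - p) * s / N + s / N = of_int (q + 1 - p) * s / N"
    using N by (simp add: field_simps)
  finally show ?case .
qed

definition strip :: "nat \<Rightarrow> real set" where
  "strip n = {x. frac (2^n * x) < (1/3)^n}"

definition layer :: "nat \<Rightarrow> real set" where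
  "layer n = strip n - (\<Union>m. strip (n + Suc m))"

definition dyadic_interval :: "nat \<Rightarrow> nat \<Rightarrow> real set" where
  "dyadic_interval L j = {real j / 2^L ..< (real j + 1) / 2^L}"

lemma sets_strip [measurable]: "strip n \<in> sets lborel"
  unfolding strip_def frac_def by measurable

lemma sets_layer [measurable]: "layer n \<in> sets lborel"
  unfolding layer_def by measurable

lemma sets_dyadic_interval [measurable]: "dyadic_interval L j \<in> sets lborel"
  unfolding dyadic_interval_def by simp

lemma emeasure_strip_dyadic_interval:
  assumes "L \<le> n"
  shows "emeasure lborel (strip n \<inter> dyadic_interval L j) = ennreal ((1/3)^n / 2^L)"
proof -
  define k where "k = n - L"
  have n: "n = L + k"
    using assms by (simp add: k_def)
  have "dyadic_interval L j = {of_int (int j * 2^k) / 2^n ..< of_int ((int j + 1) * 2^k) / 2^n}"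
  proof -
    have "real j / 2^L = of_int (int j * 2^k) / (2^n :: real)"
         "(real j + 1) / 2^L = of_int ((int j + 1) * 2^k) / (2^n :: real)"
      unfolding n by (simp_all add: power_add)
    then show ?thesis
      unfolding dyadic_interval_def by (simp only:)
  qed
  moreover have "strip n \<inter> {A..<B} = {x. A \<le> x \<and> x < B \<and> frac (2^n * x) < (1/3)^n}" for A B
    unfolding strip_def by auto
  ultimately have "strip n \<inter> dyadic_interval L j
      = {x. of_int (int j * 2^k) / 2^n \<le> x \<and> x < of_int ((int j + 1) * 2^k) / 2^n \<and> frac (2^n * x) < (1/3)^n}"
    by (simp only:)
  also have "emeasure lborel \<dots> = ennreal (of_int ((int j + 1) * 2^k - int j * 2^k) * (1/3)^n / 2^n)"
    by (rule emeasure_frac_less) (auto simp: power_le_one)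
  also have "of_int ((int j + 1) * 2^k - int j * 2^k) * (1/3::real)^n / 2^n = (1/3)^n / 2^L"
  proof -
    have "of_int ((int j + 1) * 2^k - int j * 2^k) = (2::real)^k"
      by (simp add: algebra_simps)
    moreover have "(2::real)^n = 2^L * 2^k"
      unfolding n by (rule power_add)
    ultimately show ?thesis
      by simp
  qed
  finally show ?thesis .
qed

lemma emeasure_strip_unit_interval: "emeasure lborel (strip n \<inter> {0..1}) \<le> ennreal (2 * (1/3)^n)"
proof -
  have "strip n \<inter> {0..1} \<subseteq> {x. of_int 0 / 2^n \<le> x \<and> x < of_int (2 * 2^n) / 2^n \<and> frac (2^n * x) < (1/3)^n}"
    unfolding strip_def by auto
  then have "emeasure lborel (strip n \<inter> {0..1}) \<le> emeasure lborel {x. of_int 0 / 2^n \<le> x \<and> x < of_int (2 * 2^n) / 2^n \<and> frac (2^n * x) < (1/3::real)^n}"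
    by (intro emeasure_mono) (simp_all add: sets_frac_less)
  also have "\<dots> = ennreal (of_int (2 * 2^n - 0) * (1/3)^n / 2^n)"
    by (rule emeasure_frac_less) (auto simp: power_le_one)
  finally show ?thesis by simp
qed

lemma disjoint_family_layer: "disjoint_family layer"
  unfolding disjoint_family_on_def
proof (intro ballI impI)
  have "layer m \<inter> layer n = {}" if "m < n" for m n
  proof -
    have "strip n \<subseteq> (\<Union>i. strip (m + Suc i))"
      using that by (intro SUP_upper2[of "n - Suc m"]) auto
    then show ?thesis
      unfolding layer_def by blast
  qed
  then show "layer m \<inter> layer n = {}" if "m \<noteq> n" for m n
    using that by (metis Int_commute linorder_neqE_nat)
qed

text \<open>Within a dyadic interval of level at most \<open>n\<close>, the strips of higher level cover at most half
  of the measure of \<open>strip n\<close>, because \<open>\<Sum>i. (1/3)^(Suc i) = 1/2\<close>.\<close>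

lemma emeasure_layer_dyadic_interval_pos:
  assumes "L \<le> n"
  shows "emeasure lborel (layer n \<inter> dyadic_interval L j) \<noteq> 0"
proof
  let ?D = "dyadic_interval L j"
  assume null: "emeasure lborel (layer n \<inter> ?D) = 0"
  have "strip n \<inter> ?D \<subseteq> (layer n \<inter> ?D) \<union> (\<Union>i. strip (n + Suc i) \<inter> ?D)"
    unfolding layer_def by auto
  then have "emeasure lborel (strip n \<inter> ?D) \<le> emeasure lborel ((layer n \<inter> ?D) \<union> (\<Union>i. strip (n + Suc i) \<inter> ?D))"
    by (intro emeasure_mono) auto
  also have "\<dots> \<le> emeasure lborel (layer n \<inter> ?D) + emeasure lborel (\<Union>i. strip (n + Suc i) \<inter> ?D)"
    by (intro emeasure_subadditive) auto
  also have "emeasure lborel (\<Union>i. strip (n + Suc i) \<inter> ?D) \<le> (\<Sum>i. emeasure lborel (strip (n + Suc i) \<inter> ?D))"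
    by (intro emeasure_subadditive_countably) auto
  also have "\<dots> = (\<Sum>i. ennreal ((1/3)^n / (3 * 2^L) * (1/3)^i))"
    using assms by (intro suminf_cong) (simp add: emeasure_strip_dyadic_interval power_add field_simps)
  also have "\<dots> = ennreal (\<Sum>i. (1/3)^n / (3 * 2^L) * (1/3)^i)"
    by (intro suminf_ennreal2) (auto simp: summable_geometric)
  also have "(\<Sum>i. (1/3)^n / (3 * 2^L) * (1/3::real)^i) = (1/3)^n / (2 * 2^L)"
    by (subst suminf_mult) (auto simp: summable_geometric suminf_geometric)
  finally have "ennreal ((1/3)^n / 2^L) \<le> ennreal ((1/3)^n / (2 * 2^L))"
    using null assms by (simp add: emeasure_strip_dyadic_interval)
  then show False
    by (simp add: divide_le_cancel field_simps)
qed

lemma dyadic_interval_subset_Icc: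
  assumes "0 \<le> a" "a < b" "2 / (b - a) < 2^L"
  obtains j where "dyadic_interval L j \<subseteq> {a..b}"
proof
  define j where "j = nat \<lceil>a * 2^L\<rceil>"
  have j: "a * 2^L \<le> real j" "real j < a * 2^L + 1"
    using assms(1) ceiling_correct[of "a * 2^L"] by (auto simp: j_def)
  have "a \<le> real j / 2^L"
    using j(1) by (simp add: field_simps)
  moreover have "(real j + 1) / 2^L \<le> b"
    using j(2) assms by (simp add: field_simps)
  ultimately show "dyadic_interval L j \<subseteq> {a..b}"
    unfolding dyadic_interval_def by auto
qed

lemma emeasure_layer_Icc_pos:
  assumes "0 \<le> a" "a < b"
  obtains L where "\<And>n. L \<le> n \<Longrightarrow> emeasure lborel (layer n \<inter> {a..b}) \<noteq> 0"
proof -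
  obtain L where L: "2 / (b - a) < (2::real)^L"
    using real_arch_pow[of 2 "2 / (b - a)"] by auto
  then obtain j where "dyadic_interval L j \<subseteq> {a..b}"
    using dyadic_interval_subset_Icc assms by blast
  then have "emeasure lborel (layer n \<inter> dyadic_interval L j) \<le> emeasure lborel (layer n \<inter> {a..b})" for n
    by (intro emeasure_mono) auto
  then show ?thesis
    using that emeasure_layer_dyadic_interval_pos[of L _ j] by (metis le_zero_eq)
qed

definition spike :: "real \<Rightarrow> real" where
  "spike x = (\<Sum>n. 2^n * indicator (layer n) x)"

lemma spike_layer:
  assumes "x \<in> layer n"
  shows "spike x = 2^n"
proof -
  have "x \<notin> layer m" if "m \<noteq> n" for m
    using assms disjoint_family_layer that by (auto simp: disjoint_family_on_def)
  then have "(\<lambda>m. 2^m * indicator (layer m) x :: real) = (\<lambda>m. if m = n then 2^n else 0)"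
    using assms by auto
  then show ?thesis
    unfolding spike_def using sums_single[of n "\<lambda>_. 2^n :: real"] by (simp add: sums_iff)
qed

lemma spike_outside_layers:
  assumes "x \<notin> (\<Union>n. layer n)"
  shows "spike x = 0"
  using assms by (simp add: spike_def)

lemma spike_nonneg: "0 \<le> spike x"
  by (cases "x \<in> (\<Union>n. layer n)") (auto simp: spike_layer spike_outside_layers)

lemma measure_layer_unit_interval_le: "measure lborel (layer n \<inter> {0..1}) \<le> 2 * (1/3)^n"
proof -
  have "emeasure lborel (layer n \<inter> {0..1}) \<le> emeasure lborel (strip n \<inter> {0..1})"
    by (rule emeasure_mono) (auto simp: layer_def)
  also have "\<dots> \<le> ennreal (2 * (1/3)^n)"
    by (rule emeasure_strip_unit_interval)
  finally show ?thesis
    by (simp add: measure_def enn2real_leI)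
qed

lemma summable_vanishing_off_layer:
  assumes "\<And>n. x \<notin> layer n \<Longrightarrow> u n = 0"
  shows "summable u"
proof (cases "x \<in> (\<Union>n. layer n)")
  case True
  then obtain m where m: "x \<in> layer m"
    by blast
  then have "x \<notin> layer n" if "n \<noteq> m" for n
    using disjoint_family_layer that by (auto simp: disjoint_family_on_def)
  then have "u = (\<lambda>n. if n = m then u n else 0)"
    using assms by auto
  then show ?thesis
    by (rule ssubst) (rule summable_single)
next
  case False
  then have "u = (\<lambda>n. 0)"
    using assms by auto
  then show ?thesis
    by simp
qed

lemma set_integrable_spike: "set_integrable lborel {0..1} spike"
proof -
  let ?f = "\<lambda>n x. (2::real)^n * indicator (layer n \<inter> {0..1}) x"
  have spike_sum: "indicator {0..1} x * spike x = (\<Sum>n. ?f n x)" for x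
  proof (cases "x \<in> {0..1}")
    case True
    then have "indicator (layer n \<inter> {0..1}) x = (indicator (layer n) x :: real)" for n
      by (simp add: indicator_def)
    then show ?thesis
      using True by (simp only: spike_def) simp
  qed simp
  have finite_layer: "emeasure lborel (layer n \<inter> {0..1}) < \<infinity>" for n
    by (rule le_less_trans[OF emeasure_mono[of _ "{0..1::real}"]]) auto
  have integral_bound: "norm (\<integral>x. norm (?f n x) \<partial>lborel) \<le> 2 * (2/3)^n" for n
  proof -
    have "norm (\<integral>x. norm (?f n x) \<partial>lborel) = 2^n * measure lborel (layer n \<inter> {0..1})"
      using finite_layer[of n] by (simp add: abs_mult)
    also have "\<dots> \<le> 2^n * (2 * (1/3)^n)"
      using measure_layer_unit_interval_le by (rule mult_left_mono) simp
    also have "\<dots> = 2 * (2/3)^n"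
      by (simp add: power_divide)
    finally show ?thesis .
  qed
  have "summable (\<lambda>n. 2 * (2/3::real)^n)"
    by (intro summable_mult summable_geometric) simp
  then have "summable (\<lambda>n. \<integral>x. norm (?f n x) \<partial>lborel)"
    using integral_bound by (rule summable_comparison_test')
  moreover have "summable (\<lambda>n. norm (?f n x))" for x
    by (rule summable_vanishing_off_layer[of x]) simp
  moreover have "integrable lborel (?f n)" for n
    using finite_layer[of n] by (intro integrable_mult_right integrable_real_indicator) auto
  ultimately have "integrable lborel (\<lambda>x. \<Sum>n. ?f n x)"
    by (intro integrable_suminf) auto
  then show ?thesis
    unfolding set_integrable_def by (simp add: spike_sum)
qed

definition block :: "nat \<Rightarrow> real set" where
  "block k = (\<Union>m. layer (prod_encode (k, m)))"

lemma sets_block [measurable]: "block k \<in> sets lborel"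
  unfolding block_def by measurable

lemma disjoint_family_block: "disjoint_family block"
  unfolding disjoint_family_on_def
proof (intro ballI impI)
  fix k l :: nat
  assume "k \<noteq> l"
  then have "prod_encode (k, m) \<noteq> prod_encode (l, m')" for m m'
    by (metis prod_encode_inverse prod.inject)
  then show "block k \<inter> block l = {}"
    using disjoint_family_layer unfolding block_def disjoint_family_on_def by blast
qed

lemma layer_subset_block: "layer n \<subseteq> block (fst (prod_decode n))"
  unfolding block_def by (metis UN_upper UNIV_I prod.collapse prod_decode_inverse)

lemma one_le_spike_block: "x \<in> block k \<Longrightarrow> 1 \<le> spike x"
  unfolding block_def by (auto simp: spike_layer)

lemma block_contains_large_layer:
  fixes M :: real
  assumes "0 \<le> a" "a < b"
  obtains n where "layer n \<subseteq> block k" "M < 2^n" "emeasure lborel (layer n \<inter> {a..b}) \<noteq> 0"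
proof -
  obtain L where L: "\<And>n. L \<le> n \<Longrightarrow> emeasure lborel (layer n \<inter> {a..b}) \<noteq> 0"
    using emeasure_layer_Icc_pos assms by blast
  obtain m where m: "M < (2::real)^m"
    using real_arch_pow[of 2 M] by auto
  define n where "n = prod_encode (k, max L m)"
  have "max L m \<le> n"
    unfolding n_def by (rule le_prod_encode_2)
  then have "M < 2^n"
    using m power_increasing[of m n "2::real"] by linarith
  moreover have "layer n \<subseteq> block k"
    unfolding block_def n_def by blast
  ultimately show ?thesis
    using that L \<open>max L m \<le> n\<close> by simp
qed

text \<open>\<open>spike\<close> vanishes off the layers, so on the first piece a multiple of \<open>spike\<close> is just
  an a.e. vanishing function.\<close>

definition spike_pieces :: "real set set" where
  "spike_pieces = insert ({0..1} - (\<Union>n. layer n)) (range (\<lambda>k. {0..1} \<inter> block k))"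

definition spike_space :: "(real \<Rightarrow> real) set" where
  "spike_space = {f \<in> L1_01. \<forall>S\<in>spike_pieces. ae_multiple_on lborel S spike f}"

lemma spike_pieces_sets:
  assumes "S \<in> spike_pieces"
  shows "S \<in> sets lborel"
proof -
  from assms consider "S = {0..1} - (\<Union>n. layer n)" | k where "S = {0..1} \<inter> block k"
    unfolding spike_pieces_def by blast
  then show ?thesis
  proof cases
    case 1
    have "{0..1} - (\<Union>n. layer n) \<in> sets lborel"
      by measurable
    then show ?thesis
      using 1 by simp
  qed simp
qed

lemma spike_pieces_subset: "S \<in> spike_pieces \<Longrightarrow> S \<subseteq> {0..1}"
  unfolding spike_pieces_def by auto

lemma set_integral_abs_diff_le_L1_dist:
  assumes "S \<in> sets lborel" "S \<subseteq> {0..1}" "f \<in> L1_01" "g \<in> L1_01"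
  shows "(LINT x:S|lborel. \<bar>f x - g x\<bar>) \<le> L1_dist f g"
proof -
  have "set_integrable lborel {0..1} f" "set_integrable lborel {0..1} g"
    using assms(3,4) by (simp_all add: L1_01_def)
  then have int: "set_integrable lborel {0..1} (\<lambda>x. \<bar>f x - g x\<bar>)"
    by (intro set_integrable_abs set_integral_diff)
  then have "set_integrable lborel S (\<lambda>x. \<bar>f x - g x\<bar>)"
    using assms(1,2) by (rule set_integrable_subset)
  then show ?thesis
    using int assms(2) unfolding L1_dist_def set_integrable_def set_lebesgue_integral_def
    by (intro integral_mono) (auto simp: indicator_def)
qed

lemma spike_space_L1_limit:
  assumes F: "\<And>n. F n \<in> spike_space" and g: "g \<in> L1_01"
    and lim: "(\<lambda>n. L1_dist (F n) g) \<longlonglongrightarrow> 0"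
  shows "g \<in> spike_space"
proof -
  have F_L1: "F n \<in> L1_01" for n
    using F unfolding spike_space_def by blast
  have "ae_multiple_on lborel S spike g" if S: "S \<in> spike_pieces" for S
  proof (rule ae_multiple_limit)
    have S_sub: "S \<in> sets lborel" "S \<subseteq> {0..1}"
      using spike_pieces_sets[OF S] spike_pieces_subset[OF S] by auto
    have sub: "set_integrable lborel S u" if "u \<in> L1_01" for u
      using that S_sub unfolding L1_01_def by (auto intro: set_integrable_subset)
    show "set_integrable lborel S spike"
      using S_sub set_integrable_spike by (auto intro: set_integrable_subset)
    show "set_integrable lborel S (F n)" for n
      using sub F_L1 by blast
    show "set_integrable lborel S g"
      using sub g by blast
    show "ae_multiple_on lborel S spike (F n)" for n
      using F S unfolding spike_space_def by blast
    show "(\<lambda>n. LINT x:S|lborel. \<bar>F n x - g x\<bar>) \<longlonglongrightarrow> 0"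
    proof (rule tendsto_sandwich[OF _ _ tendsto_const lim])
      show "\<forall>\<^sub>F n in sequentially. 0 \<le> (LINT x:S|lborel. \<bar>F n x - g x\<bar>)"
        by (simp add: set_lebesgue_integral_def)
      show "\<forall>\<^sub>F n in sequentially. (LINT x:S|lborel. \<bar>F n x - g x\<bar>) \<le> L1_dist (F n) g"
        using S_sub F_L1 g by (simp add: set_integral_abs_diff_le_L1_dist)
    qed
  qed (rule spike_nonneg)
  then show ?thesis
    using g unfolding spike_space_def by blast
qed

lemma spike_space_ae_cong:
  assumes "f \<in> spike_space" "g \<in> L1_01" "ae_eq_on {0..1} f g"
  shows "g \<in> spike_space"
proof -
  have "ae_multiple_on lborel S spike g" if "S \<in> spike_pieces" for S
  proof (rule ae_multiple_on_AE_cong)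
    show "ae_multiple_on lborel S spike f"
      using assms(1) that unfolding spike_space_def by blast
    have "AE x in lborel. x \<in> {0..1} \<longrightarrow> f x = g x"
      using assms(3) unfolding ae_eq_on_def .
    then show "AE x\<in>S in lborel. f x = g x"
      by (rule AE_mp) (rule AE_I2, use spike_pieces_subset[OF that] in auto)
  qed
  then show ?thesis
    using assms(2) unfolding spike_space_def by blast
qed

lemma zero_in_spike_space: "(\<lambda>x. 0) \<in> spike_space"
  unfolding spike_space_def L1_01_def by (simp add: ae_multiple_on_zero set_integrable_def)

lemma spike_space_add:
  assumes "f \<in> spike_space" "g \<in> spike_space"
  shows "(\<lambda>x. f x + g x) \<in> spike_space"
  using assms unfolding spike_space_def L1_01_def by (auto intro: ae_multiple_on_add)

lemma spike_space_cmult: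
  assumes "f \<in> spike_space"
  shows "(\<lambda>x. a * f x) \<in> spike_space"
  using assms unfolding spike_space_def L1_01_def by (auto intro: ae_multiple_on_cmult)

lemma spike_pieces_Int_block:
  assumes "S \<in> spike_pieces" "S \<noteq> {0..1} \<inter> block k"
  shows "S \<inter> block k = {}"
  using assms(1) unfolding spike_pieces_def
proof (elim insertE rangeE)
  show "S \<inter> block k = {}" if "S = {0..1} - (\<Union>n. layer n)"
    using that by (auto simp: block_def)
  show "S \<inter> block k = {}" if "S = {0..1} \<inter> block l" for l
  proof -
    have "l \<noteq> k"
      using that assms(2) by auto
    then have "block l \<inter> block k = {}"
      using disjoint_family_block by (simp add: disjoint_family_on_def)
    then show ?thesis
      using that by blast
  qed
qed

definition spike_basis :: "nat \<Rightarrow> real \<Rightarrow> real" where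
  "spike_basis k x = indicator (block k) x * spike x"

lemma spike_basis_in_spike_space: "spike_basis k \<in> spike_space"
proof -
  have "set_integrable lborel ({0..1} \<inter> block k) spike"
    by (rule set_integrable_subset[OF set_integrable_spike]) auto
  then have "spike_basis k \<in> L1_01"
    unfolding L1_01_def set_integrable_def spike_basis_def by (simp add: indicator_inter_arith mult.assoc)
  moreover have "ae_multiple_on lborel S spike (spike_basis k)" if "S \<in> spike_pieces" for S
  proof -
    have "\<exists>c. \<forall>x\<in>S. spike_basis k x = c * spike x"
    proof (cases "S = {0..1} \<inter> block k")
      case True
      then show ?thesis
        by (intro exI[of _ 1]) (simp add: spike_basis_def)
    next
      case False
      with that have "S \<inter> block k = {}"
        by (rule spike_pieces_Int_block)
      then show ?thesis
        by (intro exI[of _ 0]) (auto simp: spike_basis_def indicator_def)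
    qed
    then show ?thesis
      unfolding ae_multiple_on_def by auto
  qed
  ultimately show ?thesis
    unfolding spike_space_def by blast
qed

lemma emeasure_block_unit_interval_pos: "emeasure lborel ({0..1} \<inter> block k) \<noteq> 0"
proof -
  obtain n where n: "layer n \<subseteq> block k" "emeasure lborel (layer n \<inter> {0..1}) \<noteq> 0"
    using block_contains_large_layer[of 0 1 k 0] by auto
  then have "emeasure lborel (layer n \<inter> {0..1}) \<le> emeasure lborel ({0..1} \<inter> block k)"
    by (intro emeasure_mono) auto
  with n(2) show ?thesis
    by (metis le_zero_eq)
qed

lemma spike_basis_linear_independent:
  assumes "ae_eq_on {0..1} (\<lambda>x. \<Sum>i<n. c i * spike_basis i x) (\<lambda>x. 0)" and "j < n"
  shows "c j = 0"
proof (rule ccontr)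
  assume "c j \<noteq> 0"
  have sum_block: "(\<Sum>i<n. c i * spike_basis i x) = c j * spike x" if x: "x \<in> block j" for x
  proof -
    have "x \<notin> block i" if "i \<noteq> j" for i
      using disjoint_family_block x that unfolding disjoint_family_on_def by blast
    then have "(\<Sum>i<n. c i * spike_basis i x) = (\<Sum>i<n. if i = j then c j * spike x else 0)"
      using x by (intro sum.cong) (auto simp: spike_basis_def)
    then show ?thesis
      using assms(2) by simp
  qed
  have "AE x in lborel. x \<in> {0..1} \<longrightarrow> (\<Sum>i<n. c i * spike_basis i x) = 0"
    using assms(1) unfolding ae_eq_on_def .
  then have "AE x in lborel. x \<notin> {0..1} \<inter> block j"
  proof eventually_elim
    case (elim x)
    show ?case
    proof
      assume x: "x \<in> {0..1} \<inter> block j"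
      then have "c j * spike x = 0"
        using elim sum_block by simp
      moreover have "1 \<le> spike x"
        using x one_le_spike_block by blast
      ultimately show False
        using \<open>c j \<noteq> 0\<close> by simp
    qed
  qed
  then have "emeasure lborel ({0..1} \<inter> block j) = 0"
    by (rule emeasure_lborel_eq_0_AE)
  then show False
    using emeasure_block_unit_interval_pos by blast
qed

lemma spike_space_nonzero_block:
  assumes f: "f \<in> spike_space" and nonzero: "\<not> ae_eq_on {0..1} f (\<lambda>x. 0)"
  obtains k c where "c \<noteq> 0" "AE x\<in>{0..1} \<inter> block k in lborel. f x = c * spike x"
proof -
  have "\<forall>k. \<exists>c. AE x\<in>{0..1} \<inter> block k in lborel. f x = c * spike x"
    using f unfolding spike_space_def spike_pieces_def ae_multiple_on_def by auto
  then obtain c where c: "\<And>k. AE x\<in>{0..1} \<inter> block k in lborel. f x = c k * spike x"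
    by metis
  obtain c0 where "AE x\<in>{0..1} - (\<Union>n. layer n) in lborel. f x = c0 * spike x"
    using f unfolding spike_space_def spike_pieces_def ae_multiple_on_def by auto
  then have off_layers: "AE x\<in>{0..1} - (\<Union>n. layer n) in lborel. f x = 0"
    by eventually_elim (simp add: spike_outside_layers)
  show ?thesis
  proof (cases "\<exists>k. c k \<noteq> 0")
    case True
    then show ?thesis
      using that c by blast
  next
    case False
    have "AE x in lborel. \<forall>k. x \<in> {0..1} \<inter> block k \<longrightarrow> f x = c k * spike x"
      using c by (simp add: AE_all_countable)
    with off_layers have "AE x\<in>{0..1} in lborel. f x = 0"
    proof eventually_elim
      case (elim x)
      show ?case
      proof
        assume x: "x \<in> {0..1}"
        show "f x = 0"
        proof (cases "x \<in> (\<Union>n. layer n)")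
          case True
          then obtain n where "x \<in> block (fst (prod_decode n))"
            using layer_subset_block by blast
          then show ?thesis
            using elim(2) x False by auto
        qed (use elim(1) x in auto)
      qed
    qed
    with nonzero show ?thesis
      unfolding ae_eq_on_def by simp
  qed
qed

lemma spike_space_not_AE_bounded:
  assumes f: "f \<in> spike_space" "\<not> ae_eq_on {0..1} f (\<lambda>x. 0)"
    and ab: "0 \<le> a" "a < b" "b \<le> 1"
  shows "\<not> (AE x\<in>{a..b} in lborel. \<bar>f x\<bar> \<le> B)"
proof
  assume bounded: "AE x\<in>{a..b} in lborel. \<bar>f x\<bar> \<le> B"
  obtain k c where "c \<noteq> 0" and c: "AE x\<in>{0..1} \<inter> block k in lborel. f x = c * spike x"
    using spike_space_nonzero_block[OF f] by blast
  obtain n where n: "layer n \<subseteq> block k" "B / \<bar>c\<bar> < 2^n" "emeasure lborel (layer n \<inter> {a..b}) \<noteq> 0"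
    using block_contains_large_layer[OF ab(1,2)] by blast
  have "B < \<bar>c\<bar> * 2^n"
    using n(2) \<open>c \<noteq> 0\<close> by (simp add: divide_less_eq mult.commute)
  from bounded c have "AE x in lborel. x \<notin> layer n \<inter> {a..b}"
  proof eventually_elim
    case (elim x)
    show ?case
    proof
      assume x: "x \<in> layer n \<inter> {a..b}"
      then have "f x = c * 2^n"
        using elim(2) n(1) ab spike_layer by auto
      then show False
        using elim(1) x \<open>B < \<bar>c\<bar> * 2^n\<close> by (simp add: abs_mult)
    qed
  qed
  then show False
    using n(3) emeasure_lborel_eq_0_AE by blast
qed

lemma spike_space_nowhere_Riemann:
  assumes "f \<in> spike_space" "\<not> ae_eq_on {0..1} f (\<lambda>x. 0)"
  shows "f \<in> nowhere_Riemann_L1"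
proof -
  have "\<not> (\<exists>g. riemann_integrable_on g a b \<and> ae_eq_on {a..b} f g)"
    if ab: "0 \<le> a" "a < b" "b \<le> 1" for a b
  proof
    assume "\<exists>g. riemann_integrable_on g a b \<and> ae_eq_on {a..b} f g"
    then obtain g where g: "riemann_integrable_on g a b" and fg: "AE x\<in>{a..b} in lborel. f x = g x"
      unfolding ae_eq_on_def by blast
    obtain B where "AE x\<in>{a..b} in lborel. \<bar>g x\<bar> \<le> B"
      using riemann_integrable_on_AE_bounded[OF g] by blast
    with fg have "AE x\<in>{a..b} in lborel. \<bar>f x\<bar> \<le> B"
      by eventually_elim simp
    with spike_space_not_AE_bounded[OF assms ab] show False
      by blast
  qed
  moreover have "f \<in> L1_01"
    using assms(1) unfolding spike_space_def by blast
  ultimately show ?thesis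
    unfolding nowhere_Riemann_L1_def by blast
qed

lemma closed_inf_dim_subspace_spike_space: "closed_inf_dim_subspace_L1 spike_space"
  unfolding closed_inf_dim_subspace_L1_def
proof (intro conjI ballI allI impI)
  show "spike_space \<subseteq> L1_01"
    unfolding spike_space_def by blast
  show "(\<lambda>x. 0) \<in> spike_space"
    by (rule zero_in_spike_space)
  show "g \<in> spike_space" if "f \<in> spike_space" "g \<in> L1_01" "ae_eq_on {0..1} f g" for f g
    using that by (rule spike_space_ae_cong)
  show "(\<lambda>x. f x + g x) \<in> spike_space" if "f \<in> spike_space" "g \<in> spike_space" for f g
    using that by (rule spike_space_add)
  show "(\<lambda>x. c * f x) \<in> spike_space" if "f \<in> spike_space" for c f
    using that by (rule spike_space_cmult)
  show "g \<in> spike_space"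
    if "(\<forall>n. F n \<in> spike_space) \<and> g \<in> L1_01 \<and> (\<lambda>n. L1_dist (F n) g) \<longlonglongrightarrow> 0" for F g
    using that spike_space_L1_limit[of F g] by blast
  show "\<exists>E::nat \<Rightarrow> real \<Rightarrow> real. (\<forall>i. E i \<in> spike_space) \<and>
      (\<forall>n c. ae_eq_on {0..1} (\<lambda>x. \<Sum>i<n. c i * E i x) (\<lambda>x. 0) \<longrightarrow> (\<forall>i<n. c i = 0))"
  proof (intro exI[of _ spike_basis] conjI allI impI)
    show "spike_basis i \<in> spike_space" for i
      by (rule spike_basis_in_spike_space)
    show "c i = 0" if "ae_eq_on {0..1} (\<lambda>x. \<Sum>i<n. c i * spike_basis i x) (\<lambda>x. 0)" "i < n"
      for n c i
      using that by (rule spike_basis_linear_independent)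
  qed
qed

theorem mainTheorem2:
  shows "spaceable_L1 nowhere_Riemann_L1"
  unfolding spaceable_L1_def
  using closed_inf_dim_subspace_spike_space spike_space_nowhere_Riemann by blast

end
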